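(* Let $m\in\mathbb{N}$ and let $A$ be a finite (nonempty) sequence of positive integers. If $A$ is an $m$-palindrome, then the concatenation $A^2=AA$ is an $m$-palindrome.
   Context: For a finite sequence $(c_0,\dots,c_k)$ of positive integers, $[c_0,\dots,c_k]$ denotes the value of the finite continued fraction $c_0+\cfrac{1}{c_1+\cfrac{1}{\ddots+\cfrac{1}{c_k}}}$. A finite sequence $(c_0,\dots,c_k)$ of positive integers is an $m$-palindrome ($m\in\mathbb{N}$) if $[c_0,\dots,c_k]=m\,[c_k,\dots,c_0]$. *)

theory Defs
  imports Complex_Main
begin

text \<open>Value of the finite continued fraction [c0, c1, ..., ck]
  = c0 + 1/(c1 + 1/(... + 1/ck)). The empty list is not a valid continued
  fraction; it is assigned the value 0 only for totality.\<close>
fun cf :: "nat list \<Rightarrow> real" where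
  "cf [] = 0"
| "cf [c] = real c"
| "cf (c # d # cs) = real c + 1 / cf (d # cs)"

definition m_palindrome :: "nat \<Rightarrow> nat list \<Rightarrow> bool" where
  "m_palindrome m cs \<longleftrightarrow> cs \<noteq> [] \<and> (\<forall>c\<in>set cs. 0 < c) \<and>
     cf cs = real m * cf (rev cs)"

end

theory Submission
  imports Defs
begin

text \<open>Multiply the matrices [[c_i, 1], [1, 0]] to get the continuant matrix [[p, p'], [q, q']]
  of c_0, ..., c_k. Then [c_0, ..., c_k] = p / q, and since reversing the sequence transposes
  the matrix, [c_k, ..., c_0] = p / p'. Hence the sequence is an m-palindrome exactly when
  p' = m q. The matrix of the doubled sequence is the square of this matrix, whose off-diagonal
  entries p' (p + q') and q (p + q') are again in ratio m.\<close>

type_synonym 'a mat2 = "'a \<times> 'a \<times> 'a \<times> 'a"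

fun mat2_mult :: "'a::comm_semiring_1 mat2 \<Rightarrow> 'a mat2 \<Rightarrow> 'a mat2" where
  "mat2_mult (a, b, c, d) (e, f, g, h) = (a*e + b*g, a*f + b*h, c*e + d*g, c*f + d*h)"

fun mat2_transpose :: "'a mat2 \<Rightarrow> 'a mat2" where
  "mat2_transpose (a, b, c, d) = (a, c, b, d)"

definition mat2_one :: "'a::comm_semiring_1 mat2" where
  "mat2_one = (1, 0, 0, 1)"

lemma mat2_mult_assoc: "mat2_mult (mat2_mult x y) z = mat2_mult x (mat2_mult y z)"
  by (cases x; cases y; cases z) (simp add: algebra_simps)

lemma mat2_mult_one_left [simp]: "mat2_mult mat2_one x = x"
  by (cases x) (simp add: mat2_one_def)

lemma mat2_mult_one_right [simp]: "mat2_mult x mat2_one = x"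
  by (cases x) (simp add: mat2_one_def)

lemma mat2_transpose_mult:
  "mat2_transpose (mat2_mult x y) = mat2_mult (mat2_transpose y) (mat2_transpose x)"
  by (cases x; cases y) (simp add: algebra_simps)

fun continuant_mat :: "nat list \<Rightarrow> nat mat2" where
  "continuant_mat [] = mat2_one"
| "continuant_mat (c # cs) = mat2_mult (c, 1, 1, 0) (continuant_mat cs)"

lemma continuant_mat_append:
  "continuant_mat (xs @ ys) = mat2_mult (continuant_mat xs) (continuant_mat ys)"
  by (induction xs) (simp_all add: mat2_mult_assoc)

lemma continuant_mat_rev: "continuant_mat (rev cs) = mat2_transpose (continuant_mat cs)"
  by (induction cs) (simp_all add: continuant_mat_append mat2_transpose_mult mat2_one_def)

lemma cf_continuant_mat:
  assumes "cs \<noteq> []" "\<forall>c\<in>set cs. 0 < c" "continuant_mat cs = (p, p', q, q')"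
  shows "0 < p \<and> 0 < p' \<and> 0 < q \<and> cf cs = real p / real q"
  using assms
proof (induction cs arbitrary: p p' q q' rule: cf.induct)
  case 1
  then show ?case by simp
next
  case (2 c)
  then show ?case by (auto simp: mat2_one_def)
next
  case (3 c d cs)
  obtain r r' s s' where rs: "continuant_mat (d # cs) = (r, r', s, s')"
    by (cases "continuant_mat (d # cs)") auto
  with "3.IH" "3.prems"(2)
  have IH: "0 < r \<and> 0 < r' \<and> 0 < s \<and> cf (d # cs) = real r / real s" by simp
  from "3.prems"(3) rs have "p = c * r + s" "p' = c * r' + s'" "q = r" by auto
  moreover from "3.prems"(2) have "0 < c" by simp
  ultimately show ?case using IH by (auto simp: field_simps)
qed

lemma m_palindrome_iff_continuant_mat:
  assumes "cs \<noteq> []" "\<forall>c\<in>set cs. 0 < c" "continuant_mat cs = (p, p', q, q')"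
  shows "m_palindrome m cs \<longleftrightarrow> p' = m * q"
proof -
  have "continuant_mat (rev cs) = (p, q, p', q')"
    using assms(3) by (simp add: continuant_mat_rev)
  then have "cf (rev cs) = real p / real p'"
    using cf_continuant_mat[of "rev cs"] assms(1,2) by simp
  moreover have pos: "0 < p" "0 < p'" "0 < q" and "cf cs = real p / real q"
    using cf_continuant_mat[OF assms] by simp_all
  ultimately have "m_palindrome m cs \<longleftrightarrow> real p / real q = real m * (real p / real p')"
    using assms(1,2) by (simp add: m_palindrome_def)
  also have "\<dots> \<longleftrightarrow> real p' = real m * real q"
    using pos by (auto simp: field_simps)
  also have "\<dots> \<longleftrightarrow> p' = m * q"
    by (metis of_nat_eq_iff of_nat_mult)
  finally show ?thesis .
qed

theorem lemma3p6:
  fixes m :: nat and A :: "nat list"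
  assumes "A \<noteq> []" and "\<forall>c\<in>set A. 0 < c"
    and "m_palindrome m A"
  shows "m_palindrome m (A @ A)"
proof -
  obtain p p' q q' where M: "continuant_mat A = (p, p', q, q')"
    by (cases "continuant_mat A") auto
  have "p' = m * q"
    using assms m_palindrome_iff_continuant_mat[OF assms(1,2) M] by simp
  then have "p * p' + p' * q' = m * (q * p + q' * q)"
    by (simp add: algebra_simps)
  moreover have "continuant_mat (A @ A) = (p*p + p'*q, p*p' + p'*q', q*p + q'*q, q*p' + q'*q')"
    by (simp add: continuant_mat_append M)
  ultimately show ?thesis
    using m_palindrome_iff_continuant_mat[of "A @ A"] assms(1,2) by simp
qed

end
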